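(* Let $k,r,h$ be positive integers such that $\ell=\frac{k+h}{r}$ is an integer, and let $q$ be a prime power with $q\le\binom{\lfloor k/2\rfloor}{h-1}$. Consider a local $(k,r,h)$-code $C$ over $\mathbb{F}_q$ in which all coefficients of the heavy parities (i.e. the coefficients $c_{j,i}$ in heavy parity $j$ equal to $\sum_{i=1}^k c_{j,i}x_i$, $j\in[h]$, where $x_1,\dots,x_k$ are the data symbols) are drawn uniformly and independently at random from $\mathbb{F}_q$ (the grouping being fixed). Then the probability that $C$ is maximally recoverable is at most $\left(1-\frac{1}{2^h e^{h-1}}\right)^{k/2}$.
   Context: A local $(k,r,h)$-code over $\mathbb{F}_q$ (with $r\mid(k+h)$) is a linear systematic code of dimension $k$ and length $k+h+\frac{k+h}{r}$ consisting of $k$ data symbols $x_1,\dots,x_k$, $h$ heavy parity symbols (each an $\mathbb{F}_q$-linear combination of all data symbols), and, after partitioning the $k+h$ data and heavy parity symbols into $\frac{k+h}{r}$ groups of size $r$, one local parity per group equal to the sum of the group's symbols. A local group is such a group together with its local parity. The code is maximally recoverable if for every set $E$ of coordinates containing exactly one coordinate from each local group, puncturing the code in $E$ (deleting those coordinates) yields a maximum distance separable $[k+h,k]$ code (minimum distance $h+1$). *)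

theory Defs
  imports "HOL-Analysis.Analysis"
begin

text \<open>Symbols 0..k-1 are data symbols, symbols k..k+h-1
 are heavy parities (heavy parity j is symbol k+j), and the coordinates
 k+h .. k+h+l-1 are the local parities (local parity of group t is coordinate
 k+h+t), with l = (k+h) div r.\<close>

definition num_groups :: "nat \<Rightarrow> nat \<Rightarrow> nat \<Rightarrow> nat" where
  "num_groups k r h = (k + h) div r"

definition valid_grouping :: "nat \<Rightarrow> nat \<Rightarrow> nat \<Rightarrow> (nat \<Rightarrow> nat) \<Rightarrow> bool" where
  "valid_grouping k r h g \<longleftrightarrow>
     (\<forall>s<k+h. g s < num_groups k r h) \<and>
     (\<forall>t<num_groups k r h. card {s. s < k + h \<and> g s = t} = r)"

definition sym_val :: "nat \<Rightarrow> (nat \<times> nat \<Rightarrow> 'a::field) \<Rightarrow> (nat \<Rightarrow> 'a) \<Rightarrow> nat \<Rightarrow> 'a" where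
  "sym_val k c x s = (if s < k then x s else (\<Sum>i<k. c (s - k, i) * x i))"

definition codeword :: "nat \<Rightarrow> nat \<Rightarrow> nat \<Rightarrow> (nat \<Rightarrow> nat) \<Rightarrow> (nat \<times> nat \<Rightarrow> 'a::field)
    \<Rightarrow> (nat \<Rightarrow> 'a) \<Rightarrow> nat \<Rightarrow> 'a" where
  "codeword k r h g c x p =
     (if p < k + h then sym_val k c x p
      else (\<Sum>s\<in>{s. s < k + h \<and> g s = p - (k + h)}. sym_val k c x s))"

definition code_length :: "nat \<Rightarrow> nat \<Rightarrow> nat \<Rightarrow> nat" where
  "code_length k r h = k + h + num_groups k r h"

definition local_group :: "nat \<Rightarrow> nat \<Rightarrow> nat \<Rightarrow> (nat \<Rightarrow> nat) \<Rightarrow> nat \<Rightarrow> nat set" where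
  "local_group k r h g t = {s. s < k + h \<and> g s = t} \<union> {k + h + t}"

definition erasure_patterns :: "nat \<Rightarrow> nat \<Rightarrow> nat \<Rightarrow> (nat \<Rightarrow> nat) \<Rightarrow> nat set set" where
  "erasure_patterns k r h g =
     {E. E \<subseteq> {0..<code_length k r h} \<and>
         (\<forall>t<num_groups k r h. card (E \<inter> local_group k r h g t) = 1)}"

definition data_vectors :: "nat \<Rightarrow> (nat \<Rightarrow> 'a) set" where
  "data_vectors k = ({0..<k} \<rightarrow>\<^sub>E UNIV)"

definition punctured_enc :: "nat \<Rightarrow> nat \<Rightarrow> nat \<Rightarrow> (nat \<Rightarrow> nat) \<Rightarrow> (nat \<times> nat \<Rightarrow> 'a::field)
    \<Rightarrow> nat set \<Rightarrow> (nat \<Rightarrow> 'a) \<Rightarrow> (nat \<Rightarrow> 'a)" where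
  "punctured_enc k r h g c E x =
     restrict (codeword k r h g c x) ({0..<code_length k r h} - E)"

definition punctured_code :: "nat \<Rightarrow> nat \<Rightarrow> nat \<Rightarrow> (nat \<Rightarrow> nat) \<Rightarrow> (nat \<times> nat \<Rightarrow> 'a::field)
    \<Rightarrow> nat set \<Rightarrow> (nat \<Rightarrow> 'a) set" where
  "punctured_code k r h g c E = punctured_enc k r h g c E ` data_vectors k"

definition hamming_weight :: "nat set \<Rightarrow> (nat \<Rightarrow> 'a::zero) \<Rightarrow> nat" where
  "hamming_weight S w = card {i \<in> S. w i \<noteq> 0}"

text \<open>Minimum distance of a linear code = minimum weight of a nonzero codeword.\<close>
definition min_distance :: "nat set \<Rightarrow> (nat \<Rightarrow> 'a::zero) set \<Rightarrow> nat" where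
  "min_distance S C = Min (hamming_weight S ` (C - {restrict (\<lambda>_. 0) S}))"

text \<open>The punctured code is an MDS [k+h,k] code: dimension k (the encoding
 is injective on data vectors) and minimum distance h+1.\<close>
definition punctured_is_mds :: "nat \<Rightarrow> nat \<Rightarrow> nat \<Rightarrow> (nat \<Rightarrow> nat) \<Rightarrow> (nat \<times> nat \<Rightarrow> 'a::field)
    \<Rightarrow> nat set \<Rightarrow> bool" where
  "punctured_is_mds k r h g c E \<longleftrightarrow>
     inj_on (punctured_enc k r h g c E) (data_vectors k) \<and>
     min_distance ({0..<code_length k r h} - E) (punctured_code k r h g c E) = h + 1"

definition maximally_recoverable :: "nat \<Rightarrow> nat \<Rightarrow> nat \<Rightarrow> (nat \<Rightarrow> nat) \<Rightarrow> (nat \<times> nat \<Rightarrow> 'a::field) \<Rightarrow> bool" where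
  "maximally_recoverable k r h g c \<longleftrightarrow>
     (\<forall>E\<in>erasure_patterns k r h g. punctured_is_mds k r h g c E)"

definition coeff_space :: "nat \<Rightarrow> nat \<Rightarrow> (nat \<times> nat \<Rightarrow> 'a) set" where
  "coeff_space k h = (({0..<h} \<times> {0..<k}) \<rightarrow>\<^sub>E UNIV)"

definition prob_MR :: "nat \<Rightarrow> nat \<Rightarrow> nat \<Rightarrow> (nat \<Rightarrow> nat) \<Rightarrow> 'a::{finite,field} itself \<Rightarrow> real" where
  "prob_MR k r h g _ =
     real (card {c :: nat \<times> nat \<Rightarrow> 'a. c \<in> coeff_space k h \<and> maximally_recoverable k r h g c})
     / real (card (coeff_space k h :: (nat \<times> nat \<Rightarrow> 'a) set))"

end

(*
  Maximal recoverability forces any h columns of the h x k matrix of heavy coefficients to be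
  linearly independent: after erasing all local parities, a kernel vector supported on at most
  h columns would encode to a nonzero codeword of weight at most h.

  Fix q distinct (h-1)-subsets of the first k/2 columns. Their spans are q hyperplanes of F_q^h
  that meet pairwise in q^(h-2) vectors, so by Bonferroni they cover at least half of F_q^h.
  Each of the remaining columns must avoid all of them, so given the first k/2 columns it has at
  most q^h/2 admissible values. Hence the probability is at most 2^(-k/2), below the stated bound.
*)

theory Submission
  imports Defs
begin

(* Vectors of F_q^h are modelled as the elements of {0..<h} \<rightarrow>\<^sub>E UNIV: functions on the
   indices below h that are undefined elsewhere. *)

definition column :: "nat \<Rightarrow> (nat \<times> nat \<Rightarrow> 'a) \<Rightarrow> nat \<Rightarrow> nat \<Rightarrow> 'a" where
  "column h c i = restrict (\<lambda>j. c (j, i)) {0..<h}"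

definition column_combination ::
    "nat \<Rightarrow> (nat \<times> nat \<Rightarrow> 'a::field) \<Rightarrow> nat set \<Rightarrow> (nat \<Rightarrow> 'a) \<Rightarrow> nat \<Rightarrow> 'a" where
  "column_combination h c S x = restrict (\<lambda>j. \<Sum>i\<in>S. c (j, i) * x i) {0..<h}"

definition column_span :: "nat \<Rightarrow> (nat \<times> nat \<Rightarrow> 'a::field) \<Rightarrow> nat set \<Rightarrow> (nat \<Rightarrow> 'a) set" where
  "column_span h c S = column_combination h c S ` (S \<rightarrow>\<^sub>E UNIV)"

definition column_spans :: "nat \<Rightarrow> (nat \<times> nat \<Rightarrow> 'a::field) \<Rightarrow> nat set set \<Rightarrow> (nat \<Rightarrow> 'a) set" where
  "column_spans h c F = (\<Union>S\<in>F. column_span h c S)"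

definition general_position :: "nat \<Rightarrow> (nat \<times> nat \<Rightarrow> 'a::field) \<Rightarrow> nat set \<Rightarrow> bool" where
  "general_position h c M \<longleftrightarrow>
     (\<forall>S\<subseteq>M. finite S \<longrightarrow> card S \<le> h \<longrightarrow>
        (\<forall>x. (\<forall>j<h. (\<Sum>i\<in>S. c (j, i) * x i) = 0) \<longrightarrow> (\<forall>i\<in>S. x i = 0)))"

definition lincomb_closed :: "nat \<Rightarrow> (nat \<Rightarrow> 'a::field) set \<Rightarrow> bool" where
  "lincomb_closed h A \<longleftrightarrow> A \<subseteq> {0..<h} \<rightarrow>\<^sub>E UNIV \<and>
     (\<forall>a\<in>A. \<forall>b\<in>A. \<forall>\<alpha> \<beta>. restrict (\<lambda>j. \<alpha> * a j + \<beta> * b j) {0..<h} \<in> A)"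

lemma lincomb_closedD:
  assumes "lincomb_closed h A" "a \<in> A" "b \<in> A"
  shows "restrict (\<lambda>j. \<alpha> * a j + \<beta> * b j) {0..<h} \<in> A"
  using assms unfolding lincomb_closed_def by blast

lemma lincomb_closed_subset_PiE: "lincomb_closed h A \<Longrightarrow> A \<subseteq> {0..<h} \<rightarrow>\<^sub>E UNIV"
  unfolding lincomb_closed_def by blast

lemma general_positionD:
  assumes "general_position h c M" "S \<subseteq> M" "finite S" "card S \<le> h"
    and "\<forall>j<h. (\<Sum>i\<in>S. c (j, i) * x i) = 0" "i \<in> S"
  shows "x i = 0"
  using assms unfolding general_position_def by blast

lemma general_position_mono: "general_position h c M \<Longrightarrow> M' \<subseteq> M \<Longrightarrow> general_position h c M'"
  unfolding general_position_def by blast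

lemma general_position_cong:
  assumes "\<And>j i. j < h \<Longrightarrow> i \<in> M \<Longrightarrow> c (j, i) = c' (j, i)"
  shows "general_position h c M \<longleftrightarrow> general_position h c' M"
proof -
  have "(\<Sum>i\<in>S. c (j, i) * x i) = (\<Sum>i\<in>S. c' (j, i) * x i)" if "S \<subseteq> M" "j < h" for S j x
    using that assms by (intro sum.cong) auto
  then have kernel_eq: "(\<forall>j<h. (\<Sum>i\<in>S. c (j, i) * x i) = 0) \<longleftrightarrow> (\<forall>j<h. (\<Sum>i\<in>S. c' (j, i) * x i) = 0)"
    if "S \<subseteq> M" for S x
    using that by simp
  show ?thesis unfolding general_position_def by (simp add: kernel_eq)
qed

lemma column_combination_cong:
  assumes "\<And>j i. j < h \<Longrightarrow> i \<in> S \<Longrightarrow> c (j, i) = c' (j, i)"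
  shows "column_combination h c S = column_combination h c' S"
  using assms by (auto simp: column_combination_def fun_eq_iff intro!: sum.cong)

lemma column_spans_cong:
  assumes "\<forall>S\<in>F. S \<subseteq> M" "\<And>j i. j < h \<Longrightarrow> i \<in> M \<Longrightarrow> c (j, i) = c' (j, i)"
  shows "column_spans h c F = column_spans h c' F"
proof -
  have "column_span h c S = column_span h c' S" if "S \<in> F" for S
    unfolding column_span_def using that assms
    by (subst column_combination_cong[of h S c c']) auto
  then show ?thesis unfolding column_spans_def by simp
qed

lemma column_span_subset_PiE: "column_span h c S \<subseteq> {0..<h} \<rightarrow>\<^sub>E UNIV"
  by (auto simp: column_span_def column_combination_def)

lemma column_spans_subset_PiE: "column_spans h c F \<subseteq> {0..<h} \<rightarrow>\<^sub>E UNIV"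
  unfolding column_spans_def using column_span_subset_PiE by blast

lemma finite_column_span: "finite (column_span h (c :: nat \<times> nat \<Rightarrow> 'a::{finite,field}) S)"
  by (rule finite_subset[OF column_span_subset_PiE]) (simp add: finite_PiE)

lemma column_combination_linear:
  "column_combination h c S (restrict (\<lambda>i. \<alpha> * x i + \<beta> * y i) S) =
     restrict (\<lambda>j. \<alpha> * column_combination h c S x j + \<beta> * column_combination h c S y j) {0..<h}"
proof -
  have "(\<Sum>i\<in>S. c (j, i) * restrict (\<lambda>i. \<alpha> * x i + \<beta> * y i) S i)
      = \<alpha> * (\<Sum>i\<in>S. c (j, i) * x i) + \<beta> * (\<Sum>i\<in>S. c (j, i) * y i)" for j
    by (simp add: sum.distrib sum_distrib_left algebra_simps cong: sum.cong)
  then show ?thesis by (auto simp: column_combination_def fun_eq_iff)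
qed

lemma lincomb_closed_column_span: "lincomb_closed h (column_span h c S)"
  unfolding lincomb_closed_def
proof (intro conjI ballI allI)
  fix a b \<alpha> \<beta> assume "a \<in> column_span h c S" "b \<in> column_span h c S"
  then obtain x y where "x \<in> S \<rightarrow>\<^sub>E UNIV" "y \<in> S \<rightarrow>\<^sub>E UNIV"
    and "a = column_combination h c S x" "b = column_combination h c S y"
    unfolding column_span_def by blast
  then show "restrict (\<lambda>j. \<alpha> * a j + \<beta> * b j) {0..<h} \<in> column_span h c S"
    unfolding column_span_def
    by (auto simp: column_combination_linear[symmetric] intro!: image_eqI)
qed (rule column_span_subset_PiE)

lemma column_in_column_span:
  assumes "finite S" "s \<in> S"
  shows "column h c s \<in> column_span h c S"
proof -
  let ?e = "restrict (\<lambda>i. if i = s then 1 else 0) S"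
  have "(\<Sum>i\<in>S. c (j, i) * ?e i) = (\<Sum>i\<in>S. if i = s then c (j, i) else 0)" for j
    by (rule sum.cong) auto
  then have e_eq: "column_combination h c S ?e = column h c s"
    using assms by (auto simp: column_combination_def column_def fun_eq_iff)
  show ?thesis unfolding column_span_def
    by (rule image_eqI[where f = "column_combination h c S", OF e_eq[symmetric]]) simp
qed

lemma inj_on_column_combination:
  assumes "general_position h c M" "S \<subseteq> M" "finite S" "card S \<le> h"
  shows "inj_on (column_combination h c S) (S \<rightarrow>\<^sub>E UNIV)"
proof (rule inj_onI)
  fix x y assume x: "x \<in> S \<rightarrow>\<^sub>E UNIV" and y: "y \<in> S \<rightarrow>\<^sub>E UNIV"
    and eq: "column_combination h c S x = column_combination h c S y"
  have "(\<Sum>i\<in>S. c (j, i) * (x i - y i)) = 0" if "j < h" for j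
    using fun_cong[OF eq, of j] that
    by (simp add: column_combination_def right_diff_distrib sum_subtractf)
  then have "x i - y i = 0" if "i \<in> S" for i
    using general_positionD[OF assms, of "\<lambda>i. x i - y i"] that by blast
  then show "x = y" using x y by (auto intro: PiE_ext)
qed

lemma card_column_span:
  fixes c :: "nat \<times> nat \<Rightarrow> 'a::{finite,field}"
  assumes "general_position h c M" "S \<subseteq> M" "finite S" "card S \<le> h"
  shows "card (column_span h c S) = CARD('a) ^ card S"
  using inj_on_column_combination[OF assms] assms(3)
  by (simp add: column_span_def card_image card_PiE)

lemma column_notin_column_span:
  assumes gp: "general_position h c M" and "S \<subseteq> M" "finite S" "card S < h" "s \<in> M" "s \<notin> S"
  shows "column h c s \<notin> column_span h c S"
proof
  assume "column h c s \<in> column_span h c S"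
  then obtain x where eq: "column h c s = column_combination h c S x"
    unfolding column_span_def by blast
  define z where "z = (\<lambda>i. if i = s then -1 else x i)"
  have "(\<Sum>i\<in>insert s S. c (j, i) * z i) = 0" if "j < h" for j
  proof -
    have "(\<Sum>i\<in>S. c (j, i) * z i) = (\<Sum>i\<in>S. c (j, i) * x i)"
      using \<open>s \<notin> S\<close> by (intro sum.cong) (auto simp: z_def)
    also have "\<dots> = c (j, s)"
      using fun_cong[OF eq, of j] that by (simp add: column_def column_combination_def)
    finally show ?thesis using assms by (simp add: z_def)
  qed
  then have "z s = 0"
    using general_positionD[OF gp, of "insert s S" z s] assms by auto
  then show False by (simp add: z_def)
qed

text \<open>The translates of A \<inter> B by the multiples of v are pairwise disjoint subsets of B.\<close>
lemma card_Int_le_of_lincomb_closed: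
  fixes A B :: "(nat \<Rightarrow> 'a::{finite,field}) set"
  assumes A: "lincomb_closed h A" and B: "lincomb_closed h B" and v: "v \<in> B" "v \<notin> A"
  shows "CARD('a) * card (A \<inter> B) \<le> card B"
proof -
  define \<phi> where "\<phi> = (\<lambda>(w, t::'a). restrict (\<lambda>j. 1 * w j + t * v j) {0..<h})"
  have inj: "inj_on \<phi> ((A \<inter> B) \<times> UNIV)"
  proof (rule inj_onI, clarify)
    fix w t w' t' assume w: "w \<in> A" "w \<in> B" and w': "w' \<in> A" "w' \<in> B" and eq: "\<phi> (w, t) = \<phi> (w', t')"
    have eqj: "w j + t * v j = w' j + t' * v j" if "j < h" for j
      using fun_cong[OF eq, of j] that by (simp add: \<phi>_def)
    show "w = w' \<and> t = t'"
    proof (cases "t = t'")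
      case True
      have "w \<in> {0..<h} \<rightarrow>\<^sub>E UNIV" "w' \<in> {0..<h} \<rightarrow>\<^sub>E UNIV"
        using lincomb_closed_subset_PiE[OF A] w w' by auto
      then have "w = w'" by (rule PiE_ext) (use eqj True in simp)
      with True show ?thesis by simp
    next
      case False
      let ?u = "inverse (t - t')"
      have v_eq: "v = restrict (\<lambda>j. ?u * w' j + (- ?u) * w j) {0..<h}"
      proof
        fix j show "v j = restrict (\<lambda>j. ?u * w' j + (- ?u) * w j) {0..<h} j"
        proof (cases "j < h")
          case True
          have "(t - t') * v j = w' j - w j" using eqj[OF True] by (simp add: algebra_simps)
          moreover have "v j = ?u * ((t - t') * v j)" using False by simp
          ultimately have "v j = ?u * (w' j - w j)" by simp
          then show ?thesis using True by (simp add: algebra_simps)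
        next
          case False
          have "v \<in> {0..<h} \<rightarrow>\<^sub>E UNIV" using lincomb_closed_subset_PiE[OF B] v(1) by auto
          then show ?thesis using False PiE_arb[of v "{0..<h}" _ j] by simp
        qed
      qed
      have "v \<in> A" unfolding v_eq by (rule lincomb_closedD[OF A w'(1) w(1)])
      with v(2) show ?thesis by blast
    qed
  qed
  have img: "\<phi> ` ((A \<inter> B) \<times> UNIV) \<subseteq> B"
  proof clarify
    fix w t assume "w \<in> A" "w \<in> B"
    show "\<phi> (w, t) \<in> B" unfolding \<phi>_def prod.case by (rule lincomb_closedD[OF B \<open>w \<in> B\<close> v(1)])
  qed
  have "finite B"
    using lincomb_closed_subset_PiE[OF B] by (rule finite_subset) (simp add: finite_PiE)
  with inj img have "card ((A \<inter> B) \<times> (UNIV :: 'a set)) \<le> card B"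
    by (rule card_inj_on_le)
  then show ?thesis by (simp only: card_cartesian_product mult.commute)
qed

lemma card_column_span_Int_le:
  fixes c :: "nat \<times> nat \<Rightarrow> 'a::{finite,field}"
  assumes gp: "general_position h c M" and "S \<subseteq> M" "S' \<subseteq> M" "finite S" "finite S'"
    and "card S < h" and "\<not> S' \<subseteq> S"
  shows "CARD('a) * card (column_span h c S \<inter> column_span h c S') \<le> card (column_span h c S')"
proof -
  obtain s where s: "s \<in> S'" "s \<notin> S" using assms by blast
  show ?thesis
  proof (rule card_Int_le_of_lincomb_closed[OF lincomb_closed_column_span lincomb_closed_column_span])
    show "column h c s \<in> column_span h c S'" using column_in_column_span assms s by blast
    show "column h c s \<notin> column_span h c S"
      using column_notin_column_span[OF gp] assms s by blast
  qed
qed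

lemma card_UN_ge_Bonferroni:
  assumes "finite I" "\<And>i. i \<in> I \<Longrightarrow> finite (W i)" "\<And>i. i \<in> I \<Longrightarrow> real (card (W i)) = a"
    and "\<And>i j. i \<in> I \<Longrightarrow> j \<in> I \<Longrightarrow> i \<noteq> j \<Longrightarrow> real (card (W i \<inter> W j)) \<le> b"
  shows "real (card I) * a - real (card I) * (real (card I) - 1) / 2 * b \<le> real (card (\<Union>i\<in>I. W i))"
  using assms
proof (induction I rule: finite_induct)
  case (insert x I)
  let ?U = "\<Union>i\<in>I. W i"
  let ?n = "real (card I)"
  have IH: "?n * a - ?n * (?n - 1) / 2 * b \<le> real (card ?U)"
    using insert.prems by (intro insert.IH) auto
  have "card (W x \<inter> ?U) \<le> (\<Sum>j\<in>I. card (W x \<inter> W j))"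
    unfolding Int_UN_distrib using insert.hyps(1) by (rule card_UN_le)
  then have "real (card (W x \<inter> ?U)) \<le> (\<Sum>j\<in>I. real (card (W x \<inter> W j)))"
    by (metis of_nat_le_iff of_nat_sum)
  also have "\<dots> \<le> (\<Sum>j\<in>I. b)"
    using insert.hyps(2) insert.prems(3) by (intro sum_mono) (metis insertCI)
  finally have Int_le: "real (card (W x \<inter> ?U)) \<le> ?n * b" by simp
  have "card (W x) + card ?U = card (W x \<union> ?U) + card (W x \<inter> ?U)"
    using insert.hyps(1) insert.prems(1) by (intro card_Un_Int) simp_all
  then have Un_eq: "real (card (W x \<union> ?U)) = a + real (card ?U) - real (card (W x \<inter> ?U))"
    using insert.prems(2)[of x] by (simp add: of_nat_add[symmetric] del: of_nat_add)
  have "(?n + 1) * a - (?n + 1) * (?n + 1 - 1) / 2 * b = a + (?n * a - ?n * (?n - 1) / 2 * b) - ?n * b"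
    by (simp add: field_simps)
  also have "\<dots> \<le> real (card (W x \<union> ?U))"
    unfolding Un_eq using IH Int_le by linarith
  finally show ?case using insert.hyps by (simp add: add.commute)
qed simp

lemma card_column_spans_ge:
  fixes c :: "nat \<times> nat \<Rightarrow> 'a::{finite,field}"
  assumes gp: "general_position h c M" and "finite M" "h > 0"
    and F: "F \<subseteq> {S. S \<subseteq> M \<and> card S = h - 1}" and card_F: "card F = CARD('a)"
  shows "real CARD('a) ^ h / 2 \<le> real (card (column_spans h c F))"
proof -
  let ?q = "real CARD('a)" and ?a = "real CARD('a) ^ (h - 1)"
  have S: "S \<subseteq> M" "finite S" "card S = h - 1" if "S \<in> F" for S
    using that F \<open>finite M\<close> by (auto intro: finite_subset)
  have card_span: "real (card (column_span h c S)) = ?a" if "S \<in> F" for S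
    using card_column_span[OF gp S(1,2)] S(3) that by simp
  have "real (card (column_span h c S \<inter> column_span h c S')) \<le> ?a / ?q"
    if "S \<in> F" "S' \<in> F" "S \<noteq> S'" for S S'
  proof -
    have "\<not> S' \<subseteq> S" using that S card_subset_eq by metis
    then have "CARD('a) * card (column_span h c S \<inter> column_span h c S') \<le> card (column_span h c S')"
      using S[OF that(1)] S[OF that(2)] \<open>h > 0\<close> by (intro card_column_span_Int_le[OF gp]) auto
    then show ?thesis using card_span[OF that(2)] by (simp add: field_simps flip: of_nat_mult)
  qed
  moreover have "finite F"
    using F \<open>finite M\<close> by (auto intro: finite_subset[of F "Pow M"])
  ultimately have "real (card F) * ?a - real (card F) * (real (card F) - 1) / 2 * (?a / ?q)
      \<le> real (card (column_spans h c F))"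
    unfolding column_spans_def by (intro card_UN_ge_Bonferroni finite_column_span card_span)
  then have "?q * ?a - ?q * (?q - 1) / 2 * (?a / ?q) \<le> real (card (column_spans h c F))"
    by (simp only: card_F)
  moreover have "?q * ?a - ?q * (?q - 1) / 2 * (?a / ?q) = ?q ^ h / 2 + ?a / 2"
    using \<open>h > 0\<close> by (simp add: field_simps power_eq_if)
  moreover have "0 \<le> ?a / 2" by simp
  ultimately show ?thesis by linarith
qed

lemma card_outside_column_spans_le:
  fixes c :: "nat \<times> nat \<Rightarrow> 'a::{finite,field}"
  assumes "general_position h c M" "finite M" "h > 0"
    and "F \<subseteq> {S. S \<subseteq> M \<and> card S = h - 1}" "card F = CARD('a)"
  shows "real (card (({0..<h} \<rightarrow>\<^sub>E UNIV) - column_spans h c F)) \<le> real CARD('a) ^ h / 2"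
proof -
  have sub: "column_spans h c F \<subseteq> {0..<h} \<rightarrow>\<^sub>E (UNIV :: 'a set)"
    by (rule column_spans_subset_PiE)
  have fin: "finite ({0..<h} \<rightarrow>\<^sub>E (UNIV :: 'a set))" by (simp add: finite_PiE)
  have "card (({0..<h} \<rightarrow>\<^sub>E (UNIV :: 'a set)) - column_spans h c F) = CARD('a) ^ h - card (column_spans h c F)"
    using card_Diff_subset[OF finite_subset[OF sub fin] sub] by (simp add: card_PiE)
  moreover have "card (column_spans h c F) \<le> CARD('a) ^ h"
    using card_mono[OF fin sub] by (simp add: card_PiE)
  ultimately show ?thesis using card_column_spans_ge[OF assms] by (simp add: of_nat_diff)
qed

lemma card_coeffs_avoiding_column_spans:
  assumes "m \<le> k" "h > 0"
    and F: "F \<subseteq> {S. S \<subseteq> {0..<m} \<and> card S = h - 1}" and card_F: "card F = CARD('a::{finite,field})"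
  shows "real (card {c :: nat \<times> nat \<Rightarrow> 'a. c \<in> coeff_space k h \<and> general_position h c {0..<m} \<and>
                   (\<forall>i\<in>{m..<k}. column h c i \<notin> column_spans h c F)})
         \<le> real CARD('a) ^ (h * k) / 2 ^ (k - m)"
    (is "real (card ?C) \<le> _")
proof -
  let ?q = "real CARD('a)" and ?V = "{0..<h} \<rightarrow>\<^sub>E (UNIV :: 'a set)"
  let ?P = "({0..<h} \<times> {0..<m}) \<rightarrow>\<^sub>E (UNIV :: 'a set)"
  let ?G = "{a \<in> ?P. general_position h a {0..<m}}"
  let ?T = "Sigma ?G (\<lambda>a. {m..<k} \<rightarrow>\<^sub>E (?V - column_spans h a F))"
  define decompose where "decompose c = (restrict c ({0..<h} \<times> {0..<m}), restrict (column h c) {m..<k})"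
    for c :: "nat \<times> nat \<Rightarrow> 'a"
  have F_sub: "\<forall>S\<in>F. S \<subseteq> {0..<m}" using F by blast
  have "decompose ` ?C \<subseteq> ?T"
  proof (rule image_subsetI)
    fix c assume "c \<in> ?C"
    then have gp: "general_position h c {0..<m}"
      and avoid: "\<forall>i\<in>{m..<k}. column h c i \<notin> column_spans h c F" by auto
    let ?a = "restrict c ({0..<h} \<times> {0..<m})"
    have spans: "column_spans h ?a F = column_spans h c F"
      by (rule column_spans_cong[OF F_sub]) simp
    have "general_position h ?a {0..<m}" using gp by (subst general_position_cong) auto
    then show "decompose c \<in> ?T"
      using avoid unfolding decompose_def by (auto simp: spans column_def)
  qed
  moreover have "inj_on decompose ?C"
  proof (rule inj_onI)
    fix c c' assume "c \<in> ?C" "c' \<in> ?C" and eq: "decompose c = decompose c'"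
    then have PiE: "c \<in> ({0..<h} \<times> {0..<k}) \<rightarrow>\<^sub>E UNIV" "c' \<in> ({0..<h} \<times> {0..<k}) \<rightarrow>\<^sub>E UNIV"
      by (auto simp: coeff_space_def)
    show "c = c'"
    proof (rule PiE_ext[OF PiE], clarify)
      fix j i assume "j \<in> {0..<h}" "i \<in> {0..<k}"
      then show "c (j, i) = c' (j, i)"
        using fun_cong[OF arg_cong[OF eq, of fst], of "(j, i)"]
          fun_cong[OF fun_cong[OF arg_cong[OF eq, of snd], of i], of j]
        by (cases "i < m") (auto simp: decompose_def column_def)
    qed
  qed
  moreover have "finite ?T"
    by (intro finite_SigmaI finite_PiE) (auto simp: finite_PiE)
  ultimately have "real (card ?C) \<le> real (card ?T)"
    by (simp add: card_inj_on_le)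
  also have "\<dots> = (\<Sum>a\<in>?G. real (card (?V - column_spans h a F)) ^ (k - m))"
    by (subst card_SigmaI) (auto simp: card_PiE finite_PiE)
  also have "\<dots> \<le> (\<Sum>a\<in>?G. (?q ^ h / 2) ^ (k - m))"
    using card_outside_column_spans_le[OF _ _ \<open>h > 0\<close> F card_F]
    by (intro sum_mono power_mono) auto
  also have "\<dots> \<le> real (card ?P) * (?q ^ h / 2) ^ (k - m)"
    by (auto intro!: mult_right_mono card_mono finite_PiE)
  also have "\<dots> = ?q ^ (h * k) / 2 ^ (k - m)"
    using \<open>m \<le> k\<close> by (simp add: card_PiE power_divide flip: power_mult power_add add_mult_distrib2)
  finally show ?thesis .
qed

lemma local_parities_in_erasure_patterns:
  "{k + h..<code_length k r h} \<in> erasure_patterns k r h g"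
proof -
  have "{k + h..<code_length k r h} \<inter> local_group k r h g t = {k + h + t}"
    if "t < num_groups k r h" for t
    using that by (auto simp: local_group_def code_length_def)
  then show ?thesis by (simp add: erasure_patterns_def)
qed

lemma min_distance_le_hamming_weight:
  "finite C \<Longrightarrow> w \<in> C \<Longrightarrow> w \<noteq> restrict (\<lambda>_. 0) S \<Longrightarrow> min_distance S C \<le> hamming_weight S w"
  unfolding min_distance_def by (rule Min_le) auto

lemma maximally_recoverable_general_position:
  fixes c :: "nat \<times> nat \<Rightarrow> 'a::{finite,field}"
  assumes "maximally_recoverable k r h g c"
  shows "general_position h c {0..<k}"
  unfolding general_position_def
proof (intro allI impI ballI)
  fix S x i0 assume S: "S \<subseteq> {0..<k}" "finite S" "card S \<le> h"
    and kernel: "\<forall>j<h. (\<Sum>i\<in>S. c (j, i) * x i) = 0" and "i0 \<in> S"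
  let ?E = "{k + h..<code_length k r h}"
  define x' where "x' = restrict (\<lambda>i. if i \<in> S then x i else 0) {0..<k}"
  define w where "w = punctured_enc k r h g c ?E x'"
  have rest: "{0..<code_length k r h} - ?E = {0..<k + h}" by (auto simp: code_length_def)
  have w: "w p = sym_val k c x' p" if "p < k + h" for p
    using that by (simp add: w_def punctured_enc_def rest codeword_def)
  have support: "{p \<in> {0..<k + h}. w p \<noteq> 0} \<subseteq> S"
  proof clarify
    fix p assume p: "p \<in> {0..<k + h}" "w p \<noteq> 0"
    show "p \<in> S"
    proof (cases "p < k")
      case False
      have "(\<Sum>i<k. c (p - k, i) * x' i) = (\<Sum>i\<in>S. c (p - k, i) * x i)"
        using S(1) by (intro sum.mono_neutral_cong_right) (auto simp: x'_def)
      then have "w p = 0" using p kernel False by (simp add: w sym_val_def)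
      with p show ?thesis by simp
    qed (use p in \<open>auto simp: w sym_val_def x'_def split: if_splits\<close>)
  qed
  show "x i0 = 0"
  proof (rule ccontr)
    assume "x i0 \<noteq> 0"
    then have "w i0 \<noteq> 0" using S(1) \<open>i0 \<in> S\<close> by (auto simp: w sym_val_def x'_def)
    then have "w \<noteq> restrict (\<lambda>_. 0) {0..<k + h}" using S(1) \<open>i0 \<in> S\<close> by auto
    moreover have "w \<in> punctured_code k r h g c ?E"
      by (simp add: w_def punctured_code_def data_vectors_def x'_def)
    moreover have "finite (punctured_code k r h g c ?E)"
      by (simp add: punctured_code_def data_vectors_def finite_PiE)
    ultimately have "min_distance {0..<k + h} (punctured_code k r h g c ?E) \<le> hamming_weight {0..<k + h} w"
      by (intro min_distance_le_hamming_weight)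
    also have "\<dots> \<le> h"
      unfolding hamming_weight_def using card_mono[OF S(2) support] S(3) by linarith
    finally have "min_distance {0..<k + h} (punctured_code k r h g c ?E) \<le> h" .
    moreover have "min_distance {0..<k + h} (punctured_code k r h g c ?E) = h + 1"
      using assms local_parities_in_erasure_patterns[of k h r g]
      by (auto simp: maximally_recoverable_def punctured_is_mds_def rest)
    ultimately show False by simp
  qed
qed

lemma prob_MR_le_half_power:
  assumes "h > 0" and q_le: "CARD('a::{finite,field}) \<le> (k div 2) choose (h - 1)"
  shows "prob_MR k r h g TYPE('a) \<le> (1 / 2) ^ (k - k div 2)"
proof -
  define m where "m = k div 2"
  have "CARD('a) \<le> card {S. S \<subseteq> {0..<m} \<and> card S = h - 1}"
    using q_le n_subsets[of "{0..<m}" "h - 1"] by (simp add: m_def)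
  then obtain F where F: "F \<subseteq> {S. S \<subseteq> {0..<m} \<and> card S = h - 1}" and card_F: "card F = CARD('a)"
    by (meson obtain_subset_with_card_n)
  let ?MR = "{c :: nat \<times> nat \<Rightarrow> 'a. c \<in> coeff_space k h \<and> maximally_recoverable k r h g c}"
  let ?C = "{c :: nat \<times> nat \<Rightarrow> 'a. c \<in> coeff_space k h \<and> general_position h c {0..<m} \<and>
               (\<forall>i\<in>{m..<k}. column h c i \<notin> column_spans h c F)}"
  have "?MR \<subseteq> ?C"
  proof
    fix c assume "c \<in> ?MR"
    then have c: "c \<in> coeff_space k h" and gp: "general_position h c {0..<k}"
      using maximally_recoverable_general_position by auto
    have "column h c i \<notin> column_span h c S" if "i \<in> {m..<k}" "S \<in> F" for i S
    proof -
      have "S \<subseteq> {0..<m}" "card S = h - 1" using F that(2) by auto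
      moreover have "m \<le> k" by (simp add: m_def)
      ultimately show ?thesis
        using that(1) \<open>h > 0\<close> finite_subset[of S "{0..<m}"]
        by (intro column_notin_column_span[OF gp]) auto
    qed
    then show "c \<in> ?C"
      using c general_position_mono[OF gp] by (auto simp: m_def column_spans_def)
  qed
  moreover have "finite ?C" by (simp add: coeff_space_def finite_PiE)
  ultimately have "real (card ?MR) \<le> real (card ?C)" by (simp add: card_mono)
  also have "\<dots> \<le> real CARD('a) ^ (h * k) / 2 ^ (k - m)"
    using card_coeffs_avoiding_column_spans[OF _ \<open>h > 0\<close> F card_F] by (simp add: m_def)
  finally have "real (card ?MR) / real CARD('a) ^ (h * k) \<le> 1 / 2 ^ (k - m)"
    by (simp add: divide_le_eq field_simps)
  then show ?thesis
    by (simp add: prob_MR_def coeff_space_def card_PiE card_cartesian_product m_def power_one_over)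
qed

theorem theorem20:
  fixes k r h :: nat and g :: "nat \<Rightarrow> nat"
  assumes "k > 0" and "r > 0" and "h > 0"
    and "r dvd (k + h)"
    and "valid_grouping k r h g"
    and "CARD('a::{finite,field}) \<le> (k div 2) choose (h - 1)"
  shows "prob_MR k r h g TYPE('a)
           \<le> (1 - 1 / (2 ^ h * exp (real h - 1))) powr (real k / 2)"
proof -
  have "(2::real) \<le> 2 ^ h" using power_increasing[of 1 h "2::real"] \<open>h > 0\<close> by simp
  moreover have "1 \<le> exp (real h - 1)" using \<open>h > 0\<close> by simp
  ultimately have "(2::real) * 1 \<le> 2 ^ h * exp (real h - 1)" by (intro mult_mono) auto
  then have half_le: "1 / 2 \<le> 1 - 1 / (2 ^ h * exp (real h - 1))"
    by (simp add: field_simps)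
  have "prob_MR k r h g TYPE('a) \<le> (1 / 2) ^ (k - k div 2)"
    using prob_MR_le_half_power[OF \<open>h > 0\<close> assms(6)] .
  also have "\<dots> = (1 / 2) powr real (k - k div 2)" by (rule powr_realpow[symmetric]) simp
  also have "\<dots> \<le> (1 / 2) powr (real k / 2)"
    by (rule powr_mono') linarith+
  also have "\<dots> \<le> (1 - 1 / (2 ^ h * exp (real h - 1))) powr (real k / 2)"
    using half_le by (intro powr_mono2) auto
  finally show ?thesis .
qed

end
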